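(* The matrix $I+\Pi S$ acting on $\mathbb V(\Gamma_\oplus)$ is invertible; every eigenvalue $\lambda$ of $I+\Pi S$ satisfies $\lambda\ne0$ and $|1-\lambda|\le1$; $\|(I+\Pi S)p\|_T\le2\|p\|_T$ for all $p\in\mathbb V(\Gamma_\oplus)$; and there exists a constant $\alpha>0$ such that $$\operatorname{Re}\big((p,(I+\Pi S)p)_T\big)\ge\alpha\|p\|_T^2\qquad\text{for all }p\in\mathbb V(\Gamma_\oplus).$$
   Context: Let $\mathcal E$ be a finite set, $\mathcal E_1,\dots,\mathcal E_J$ subsets with $\mathcal E=\bigcup_j\mathcal E_j$, $\Sigma:=\bigcup_{1\le j<k\le J}(\mathcal E_j\cap\mathcal E_k)$, $\Gamma$ any set with $\Sigma\subset\Gamma\subset\mathcal E$, $\Gamma_j:=\Gamma\cap\mathcal E_j$. $\mathbb V(\mathcal F):=\mathbb C^{\mathcal F}$; $\mathbb V(\mathcal E_\oplus):=\prod_j\mathbb V(\mathcal E_j)$, $\mathbb V(\Gamma_\oplus):=\prod_j\mathbb V(\Gamma_j)$. Restrictions: $Rx=((x_e)_{e\in\mathcal E_1},\dots,(x_e)_{e\in\mathcal E_J})$ for $x\in\mathbb V(\mathcal E)$; $Qx=((x_e)_{e\in\Gamma_1},\dots,(x_e)_{e\in\Gamma_J})$ for $x\in\mathbb V(\Gamma)$; $B_jx=(x_e)_{e\in\Gamma_j}$ for $x\in\mathbb V(\mathcal E_j)$, $B:=\mathrm{diag}(B_j)$; $\top$ is the non-conjugated transpose. For each $j$ let $T_j$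 be a real symmetric positive definite matrix on $\mathbb V(\Gamma_j)$, $T:=\mathrm{diag}(T_1,\dots,T_J)$, $(x,y)_T:=x^\top T\bar y$, $\|x\|_T^2:=(x,x)_T$. $P:=Q(Q^\top TQ)^{-1}Q^\top T$ (the $T$-orthogonal projector onto $\operatorname{range}(Q)$) and $\Pi:=2P-I$. Let $A=\mathrm{diag}(A_1,\dots,A_J)$, $A_j\in\mathbb C^{\mathcal E_j\times\mathcal E_j}$, satisfying (A1) $\operatorname{Im}(\bar v^\top Av)\le0$ for all $v\in\mathbb V(\mathcal E_\oplus)$ and (A2) $R^\top AR$ invertible; then $A-\imath B^\top TB$ is invertible. Scattering matrix: $S:=I+2\imath B(A-\imath B^\top TB)^{-1}B^\top T$. *)

theory Defs
  imports Complex_Main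
begin

text \<open>Matrices over finite index sets: a matrix is a function
  M :: 'i => 'k => complex, only its entries on the relevant index sets matter;
  products sum over an explicitly given finite index set.\<close>

definition mmul :: "'j set \<Rightarrow> ('i \<Rightarrow> 'j \<Rightarrow> complex) \<Rightarrow> ('j \<Rightarrow> 'k \<Rightarrow> complex) \<Rightarrow> 'i \<Rightarrow> 'k \<Rightarrow> complex" where
  "mmul K M N = (\<lambda>i k. \<Sum>j\<in>K. M i j * N j k)"

definition mvec :: "'k set \<Rightarrow> ('i \<Rightarrow> 'k \<Rightarrow> complex) \<Rightarrow> ('k \<Rightarrow> complex) \<Rightarrow> 'i \<Rightarrow> complex" where
  "mvec K M x = (\<lambda>i. \<Sum>k\<in>K. M i k * x k)"

definition mI :: "'i \<Rightarrow> 'i \<Rightarrow> complex" where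
  "mI = (\<lambda>i k. if i = k then 1 else 0)"

definition mT :: "('i \<Rightarrow> 'k \<Rightarrow> complex) \<Rightarrow> 'k \<Rightarrow> 'i \<Rightarrow> complex" where
  "mT M = (\<lambda>k i. M i k)"

definition is_minv :: "'i set \<Rightarrow> ('i \<Rightarrow> 'i \<Rightarrow> complex) \<Rightarrow> ('i \<Rightarrow> 'i \<Rightarrow> complex) \<Rightarrow> bool" where
  "is_minv I M N \<longleftrightarrow> (\<forall>i\<in>I. \<forall>k\<in>I. mmul I M N i k = mI i k \<and> mmul I N M i k = mI i k)"

definition minvertible :: "'i set \<Rightarrow> ('i \<Rightarrow> 'i \<Rightarrow> complex) \<Rightarrow> bool" where
  "minvertible I M \<longleftrightarrow> (\<exists>N. is_minv I M N)"

definition minv :: "'i set \<Rightarrow> ('i \<Rightarrow> 'i \<Rightarrow> complex) \<Rightarrow> 'i \<Rightarrow> 'i \<Rightarrow> complex" where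
  "minv I M = (SOME N. is_minv I M N)"

text \<open>Index sets: E_oplus = disjoint union of the E_j, Gamma_oplus = disjoint union of
  the Gamma_j = Gamma \<inter> E_j, j = 1..J.\<close>

definition EO :: "nat \<Rightarrow> (nat \<Rightarrow> 'e set) \<Rightarrow> (nat \<times> 'e) set" where
  "EO J Es = {(j, e). j \<in> {1..J} \<and> e \<in> Es j}"

definition GO :: "nat \<Rightarrow> (nat \<Rightarrow> 'e set) \<Rightarrow> 'e set \<Rightarrow> (nat \<times> 'e) set" where
  "GO J Es \<Gamma> = {(j, e). j \<in> {1..J} \<and> e \<in> \<Gamma> \<inter> Es j}"

definition Sigma_set :: "nat \<Rightarrow> (nat \<Rightarrow> 'e set) \<Rightarrow> 'e set" where
  "Sigma_set J Es = (\<Union>j\<in>{1..J}. \<Union>k\<in>{1..J}. if j < k then Es j \<inter> Es k else {})"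

definition blockdiag :: "(nat \<Rightarrow> 'e \<Rightarrow> 'e \<Rightarrow> complex) \<Rightarrow> nat \<times> 'e \<Rightarrow> nat \<times> 'e \<Rightarrow> complex" where
  "blockdiag Mb = (\<lambda>(j, e) (k, e'). if j = k then Mb j e e' else 0)"

text \<open>Restriction R : V(E) -> V(E_oplus), Q : V(Gamma) -> V(Gamma_oplus),
  B : V(E_oplus) -> V(Gamma_oplus) (all 0/1 matrices).\<close>
definition Rmat :: "nat \<times> 'e \<Rightarrow> 'e \<Rightarrow> complex" where
  "Rmat = (\<lambda>(j, e) e'. if e = e' then 1 else 0)"

definition Qmat :: "nat \<times> 'e \<Rightarrow> 'e \<Rightarrow> complex" where
  "Qmat = (\<lambda>(j, e) e'. if e = e' then 1 else 0)"

definition Bmat :: "nat \<times> 'e \<Rightarrow> nat \<times> 'e \<Rightarrow> complex" where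
  "Bmat = (\<lambda>(j, e) (k, e'). if j = k \<and> e = e' then 1 else 0)"

definition Tmat :: "(nat \<Rightarrow> 'e \<Rightarrow> 'e \<Rightarrow> real) \<Rightarrow> nat \<times> 'e \<Rightarrow> nat \<times> 'e \<Rightarrow> complex" where
  "Tmat Tb = blockdiag (\<lambda>j e e'. complex_of_real (Tb j e e'))"

definition innerT :: "nat \<Rightarrow> (nat \<Rightarrow> 'e set) \<Rightarrow> 'e set \<Rightarrow> (nat \<Rightarrow> 'e \<Rightarrow> 'e \<Rightarrow> real)
    \<Rightarrow> (nat \<times> 'e \<Rightarrow> complex) \<Rightarrow> (nat \<times> 'e \<Rightarrow> complex) \<Rightarrow> complex" where
  "innerT J Es \<Gamma> Tb x y = (\<Sum>i\<in>GO J Es \<Gamma>. \<Sum>k\<in>GO J Es \<Gamma>. x i * Tmat Tb i k * cnj (y k))"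

definition normT :: "nat \<Rightarrow> (nat \<Rightarrow> 'e set) \<Rightarrow> 'e set \<Rightarrow> (nat \<Rightarrow> 'e \<Rightarrow> 'e \<Rightarrow> real)
    \<Rightarrow> (nat \<times> 'e \<Rightarrow> complex) \<Rightarrow> real" where
  "normT J Es \<Gamma> Tb x = sqrt (Re (innerT J Es \<Gamma> Tb x x))"

definition Pmat :: "nat \<Rightarrow> (nat \<Rightarrow> 'e set) \<Rightarrow> 'e set \<Rightarrow> (nat \<Rightarrow> 'e \<Rightarrow> 'e \<Rightarrow> real)
    \<Rightarrow> nat \<times> 'e \<Rightarrow> nat \<times> 'e \<Rightarrow> complex" where
  "Pmat J Es \<Gamma> Tb =
     (let G = GO J Es \<Gamma>; T = Tmat Tb;
          QTQ = mmul G (mmul G (mT Qmat) T) Qmat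
      in mmul G (mmul \<Gamma> (mmul \<Gamma> Qmat (minv \<Gamma> QTQ)) (mT Qmat)) T)"

definition Pimat :: "nat \<Rightarrow> (nat \<Rightarrow> 'e set) \<Rightarrow> 'e set \<Rightarrow> (nat \<Rightarrow> 'e \<Rightarrow> 'e \<Rightarrow> real)
    \<Rightarrow> nat \<times> 'e \<Rightarrow> nat \<times> 'e \<Rightarrow> complex" where
  "Pimat J Es \<Gamma> Tb = (\<lambda>i k. 2 * Pmat J Es \<Gamma> Tb i k - mI i k)"

definition Smat :: "nat \<Rightarrow> (nat \<Rightarrow> 'e set) \<Rightarrow> 'e set \<Rightarrow> (nat \<Rightarrow> 'e \<Rightarrow> 'e \<Rightarrow> complex)
    \<Rightarrow> (nat \<Rightarrow> 'e \<Rightarrow> 'e \<Rightarrow> real) \<Rightarrow> nat \<times> 'e \<Rightarrow> nat \<times> 'e \<Rightarrow> complex" where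
  "Smat J Es \<Gamma> Ab Tb =
     (let G = GO J Es \<Gamma>; EE = EO J Es; T = Tmat Tb; A = blockdiag Ab;
          BTB = mmul G (mmul G (mT Bmat) T) Bmat;
          K = (\<lambda>i k. A i k - \<i> * BTB i k)
      in (\<lambda>i k. mI i k + 2 * \<i> *
            mmul G (mmul EE (mmul EE Bmat (minv EE K)) (mT Bmat)) T i k))"

end

theory Submission
  imports Defs "Jordan_Normal_Form.Determinant" "HOL-Analysis.Analysis"
begin

(* S is a contraction for the T-norm because A is dissipative, and Pi = 2P - I is a
   T-isometry because P is the T-orthogonal projection onto the range of Q; hence
   q = Pi S p satisfies |q|_T <= |p|_T.  This gives the eigenvalue bound |1 - lambda| <= 1,
   the bound |p + q|_T <= 2 |p|_T and 2 Re (p, p + q)_T >= |p + q|_T^2.  Assumption (A2)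
   makes I + Pi S injective, so the last quantity is positive on the unit sphere, and
   compactness of the sphere yields the coercivity constant. *)

subsection \<open>Matrices over finite index sets\<close>

lemma mvec_mmul:
  assumes "finite K" "finite L"
  shows "mvec K (mmul L M N) x = mvec L M (mvec K N x)"
  unfolding mvec_def mmul_def
  by (rule ext) (simp add: sum_distrib_left sum_distrib_right mult.assoc sum.swap[of _ K L])

lemma mvec_mI:
  assumes "finite I" "i \<in> I"
  shows "mvec I mI x i = x i"
proof -
  have "mvec I mI x i = (\<Sum>k\<in>I. if i = k then x k else 0)"
    unfolding mvec_def mI_def by (rule sum.cong) auto
  with assms show ?thesis by simp
qed

lemma mvec_cong: "(\<And>k. k \<in> K \<Longrightarrow> x k = x' k) \<Longrightarrow> mvec K M x = mvec K M x'"
  unfolding mvec_def by (rule ext) (auto intro: sum.cong)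

lemma mvec_cong_matrix: "(\<And>k. k \<in> K \<Longrightarrow> M i k = M' i k) \<Longrightarrow> mvec K M x i = mvec K M' x i"
  unfolding mvec_def by (auto intro: sum.cong)

lemma mvec_add: "mvec K M (\<lambda>k. a k + b k) = (\<lambda>i. mvec K M a i + mvec K M b i)"
  unfolding mvec_def by (simp add: distrib_left sum.distrib)

lemma mvec_diff: "mvec K M (\<lambda>k. a k - b k) = (\<lambda>i. mvec K M a i - mvec K M b i)"
  unfolding mvec_def by (simp add: right_diff_distrib sum_subtractf)

lemma mvec_scale: "mvec K M (\<lambda>k. c * a k) = (\<lambda>i. c * mvec K M a i)"
  unfolding mvec_def by (simp add: sum_distrib_left mult.left_commute)

lemma mvec_zero: "mvec K M (\<lambda>k. 0) = (\<lambda>i. 0)"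
  unfolding mvec_def by simp

lemma mvec_matrix_add: "mvec K (\<lambda>i k. M i k + N i k) x i = mvec K M x i + mvec K N x i"
  unfolding mvec_def by (simp add: distrib_right sum.distrib)

lemma mvec_matrix_diff: "mvec K (\<lambda>i k. M i k - N i k) x i = mvec K M x i - mvec K N x i"
  unfolding mvec_def by (simp add: left_diff_distrib sum_subtractf)

lemma mvec_matrix_scale: "mvec K (\<lambda>i k. c * M i k) x i = c * mvec K M x i"
  unfolding mvec_def by (simp add: sum_distrib_left mult.assoc)

lemma is_minv_minv: "minvertible I N \<Longrightarrow> is_minv I N (minv I N)"
  unfolding minvertible_def minv_def by (erule someI_ex)

lemma mvec_minv_right:
  assumes "finite I" "minvertible I N" "i \<in> I"
  shows "mvec I N (mvec I (minv I N) b) i = b i"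
proof -
  have "mvec I N (mvec I (minv I N) b) i = mvec I (mmul I N (minv I N)) b i"
    using assms(1) by (simp add: mvec_mmul)
  also have "\<dots> = mvec I mI b i"
    using is_minv_minv[OF assms(2)] assms(3) unfolding is_minv_def
    by (intro mvec_cong_matrix) auto
  finally show ?thesis using assms(1,3) by (simp add: mvec_mI)
qed

lemma minvertible_kernel:
  assumes "finite I" "minvertible I N" "\<forall>i\<in>I. mvec I N x i = 0" "i \<in> I"
  shows "x i = 0"
proof -
  have "x i = mvec I (mmul I (minv I N) N) x i"
    using is_minv_minv[OF assms(2)] assms(1,4) unfolding is_minv_def
    by (subst mvec_cong_matrix[where M' = mI]) (auto simp: mvec_mI)
  also have "\<dots> = mvec I (minv I N) (mvec I N x) i"
    using assms(1) by (simp add: mvec_mmul)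
  also have "\<dots> = 0"
    using assms(3) by (simp add: mvec_cong[of I "mvec I N x" "\<lambda>_. 0"] mvec_zero)
  finally show ?thesis .
qed

lemma minvertible_if_mat_left_inverse:
  fixes N :: "'i \<Rightarrow> 'i \<Rightarrow> complex" and g :: "nat \<Rightarrow> 'i" and n :: nat
  defines "NM \<equiv> Matrix.mat n n (\<lambda>(a, b). N (g a) (g b))"
  assumes g: "bij_betw g {0..<n} I"
    and B: "B \<in> carrier_mat n n" "B * NM = 1\<^sub>m n"
  shows "minvertible I N"
proof -
  define h where "h = inv_into {0..<n} g"
  have h: "h i < n" "g (h i) = i" if "i \<in> I" for i
    using g that unfolding h_def bij_betw_def
    by (auto simp: f_inv_into_f inv_into_into[of i g "{0..<n}", simplified])
  have h_eq_iff: "h i = h k \<longleftrightarrow> i = k" if "i \<in> I" "k \<in> I" for i k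
    using h that by metis
  have NMc: "NM \<in> carrier_mat n n" unfolding NM_def by simp
  have NB: "NM * B = 1\<^sub>m n" by (rule mat_mult_left_right_inverse[OF B(1) NMc B(2)])
  have reindex: "sum f I = (\<Sum>b=0..<n. f (g b))" for f :: "'i \<Rightarrow> complex"
    by (simp only: sum.reindex_bij_betw[OF g])
  have hg: "h (g b) = b" if "b < n" for b
    using g that unfolding h_def bij_betw_def by (simp add: inv_into_f_f)
  define Ni where "Ni i k = B $$ (h i, h k)" for i k
  have "mmul I N Ni i k = mI i k \<and> mmul I Ni N i k = mI i k" if "i \<in> I" "k \<in> I" for i k
  proof
    have "mmul I N Ni i k = (NM * B) $$ (h i, h k)"
      unfolding mmul_def Ni_def reindex using B(1) h that
      by (simp add: NM_def index_mult_mat scalar_prod_def hg)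
    then show "mmul I N Ni i k = mI i k"
      using NB h that h_eq_iff by (simp add: mI_def)
    have "mmul I Ni N i k = (B * NM) $$ (h i, h k)"
      unfolding mmul_def Ni_def reindex using B(1) h that
      by (simp add: NM_def index_mult_mat scalar_prod_def hg)
    then show "mmul I Ni N i k = mI i k"
      using B(2) h that h_eq_iff by (simp add: mI_def)
  qed
  then show ?thesis unfolding minvertible_def is_minv_def by blast
qed

lemma det_nonzero_if_injective:
  fixes N :: "'i \<Rightarrow> 'i \<Rightarrow> complex" and g :: "nat \<Rightarrow> 'i" and n :: nat
  defines "NM \<equiv> Matrix.mat n n (\<lambda>(a, b). N (g a) (g b))"
  assumes g: "bij_betw g {0..<n} I"
    and inj: "\<And>x. \<forall>i\<in>I. mvec I N x i = 0 \<Longrightarrow> \<forall>i\<in>I. x i = 0"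
  shows "Determinant.det NM \<noteq> 0"
proof
  assume "Determinant.det NM = 0"
  then obtain v where v: "v \<in> carrier_vec n" "v \<noteq> 0\<^sub>v n" "NM *\<^sub>v v = 0\<^sub>v n"
    using det_0_iff_vec_prod_zero_field[of NM n] unfolding NM_def by auto
  define x where "x = (\<lambda>i. Matrix.vec_index v (inv_into {0..<n} g i))"
  have x_g: "x (g a) = Matrix.vec_index v a" if "a < n" for a
    using g that by (simp add: x_def bij_betw_def inv_into_f_f)
  have "mvec I N x (g a) = Matrix.vec_index (NM *\<^sub>v v) a" if "a < n" for a
  proof -
    have "mvec I N x (g a) = (\<Sum>b=0..<n. N (g a) (g b) * Matrix.vec_index v b)"
      unfolding mvec_def sum.reindex_bij_betw[OF g, symmetric] by (intro sum.cong) (simp_all add: x_g)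
    also have "\<dots> = Matrix.vec_index (NM *\<^sub>v v) a"
      using v(1) that by (simp add: NM_def scalar_prod_def)
    finally show ?thesis .
  qed
  with v(3) have "\<forall>i\<in>I. mvec I N x i = 0"
    using g unfolding bij_betw_def by force
  then have "\<forall>i\<in>I. x i = 0" by (rule inj)
  then have "v = 0\<^sub>v n"
    using g v(1) x_g unfolding bij_betw_def by (intro eq_vecI) auto
  with v(2) show False by simp
qed

lemma minvertible_if_injective:
  fixes N :: "'i \<Rightarrow> 'i \<Rightarrow> complex"
  assumes "finite I" and inj: "\<And>x. \<forall>i\<in>I. mvec I N x i = 0 \<Longrightarrow> \<forall>i\<in>I. x i = 0"
  shows "minvertible I N"
proof -
  obtain n and g :: "nat \<Rightarrow> 'i" where g: "bij_betw g {0..<n} I"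
    using ex_bij_betw_nat_finite[OF assms(1)] by metis
  define NM where "NM = Matrix.mat n n (\<lambda>(a, b). N (g a) (g b))"
  have "NM \<in> carrier_mat n n" unfolding NM_def by simp
  moreover have "Determinant.det NM \<noteq> 0"
    unfolding NM_def using g inj by (rule det_nonzero_if_injective)
  ultimately obtain B where "B \<in> carrier_mat n n" "B * NM = 1\<^sub>m n"
    using det_non_zero_imp_unit[of NM n "()"] unfolding Units_def ring_mat_def by auto
  then show ?thesis
    using minvertible_if_mat_left_inverse[OF g] unfolding NM_def by blast
qed

subsection \<open>Positive definite forms\<close>

definition sform :: "'i set \<Rightarrow> ('i \<Rightarrow> 'i \<Rightarrow> complex) \<Rightarrow> ('i \<Rightarrow> complex) \<Rightarrow> ('i \<Rightarrow> complex) \<Rightarrow> complex"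
  where "sform G T x y = (\<Sum>i\<in>G. \<Sum>k\<in>G. x i * T i k * cnj (y k))"

locale spd_matrix =
  fixes G :: "'i set" and T :: "'i \<Rightarrow> 'i \<Rightarrow> complex"
  assumes finite_G: "finite G"
    and real_T: "\<And>i k. i \<in> G \<Longrightarrow> k \<in> G \<Longrightarrow> cnj (T i k) = T i k"
    and symmetric_T: "\<And>i k. i \<in> G \<Longrightarrow> k \<in> G \<Longrightarrow> T i k = T k i"
    and positive_T: "\<And>x. \<exists>i\<in>G. x i \<noteq> 0 \<Longrightarrow> Re (sform G T x x) > 0"
begin

abbreviation ip :: "('i \<Rightarrow> complex) \<Rightarrow> ('i \<Rightarrow> complex) \<Rightarrow> complex"
  where "ip \<equiv> sform G T"

abbreviation sqnorm :: "('i \<Rightarrow> complex) \<Rightarrow> real"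
  where "sqnorm x \<equiv> Re (ip x x)"

lemma ip_add_left: "ip (\<lambda>i. a i + b i) y = ip a y + ip b y"
  unfolding sform_def by (simp add: distrib_right sum.distrib)

lemma ip_add_right: "ip x (\<lambda>i. a i + b i) = ip x a + ip x b"
  unfolding sform_def by (simp add: distrib_left sum.distrib)

lemma ip_scale_left: "ip (\<lambda>i. c * a i) y = c * ip a y"
  unfolding sform_def by (simp add: sum_distrib_left mult.assoc)

lemma ip_scale_right: "ip x (\<lambda>i. c * a i) = cnj c * ip x a"
  unfolding sform_def by (simp add: sum_distrib_left mult_ac)

lemma ip_cong:
  "(\<And>i. i \<in> G \<Longrightarrow> x i = x' i) \<Longrightarrow> (\<And>i. i \<in> G \<Longrightarrow> y i = y' i) \<Longrightarrow> ip x y = ip x' y'"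
  unfolding sform_def by (intro sum.cong) auto

lemma ip_zero_left: "(\<And>i. i \<in> G \<Longrightarrow> x i = 0) \<Longrightarrow> ip x y = 0"
  unfolding sform_def by simp

lemma ip_eq_sum_mvec: "ip x y = (\<Sum>i\<in>G. x i * cnj (mvec G T y i))"
  unfolding sform_def mvec_def
  by (simp add: sum_distrib_left mult.assoc real_T cong: sum.cong)

lemma ip_commute: "ip y x = cnj (ip x y)"
proof -
  have "cnj (ip x y) = (\<Sum>i\<in>G. \<Sum>k\<in>G. cnj (x i) * T i k * y k)"
    unfolding sform_def by (simp add: real_T cong: sum.cong)
  also have "\<dots> = (\<Sum>k\<in>G. \<Sum>i\<in>G. cnj (x i) * T i k * y k)"
    by (rule sum.swap)
  also have "\<dots> = ip y x"
    unfolding sform_def by (intro sum.cong refl) (simp add: symmetric_T mult_ac)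
  finally show ?thesis by simp
qed

lemma ip_self_real: "ip x x = complex_of_real (sqnorm x)"
  using ip_commute[of x x] by (simp add: complex_eq_iff)

lemma ip_expand:
  "ip (\<lambda>i. a i + c * b i) (\<lambda>i. a i + c * b i)
     = ip a a + cnj c * ip a b + c * ip b a + c * cnj c * ip b b"
  by (simp add: ip_add_left ip_add_right ip_scale_left ip_scale_right algebra_simps)

lemma sqnorm_nonneg: "sqnorm x \<ge> 0"
  using positive_T[of x] ip_zero_left[of x x] by (cases "\<exists>i\<in>G. x i \<noteq> 0") auto

lemma zero_if_sqnorm_nonpos: "sqnorm x \<le> 0 \<Longrightarrow> i \<in> G \<Longrightarrow> x i = 0"
  using positive_T[of x] by force

lemma zero_if_mvec_T_zero: "(\<And>i. i \<in> G \<Longrightarrow> mvec G T x i = 0) \<Longrightarrow> i \<in> G \<Longrightarrow> x i = 0"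
  by (rule zero_if_sqnorm_nonpos) (simp add: ip_eq_sum_mvec)

lemma sqnorm_scale: "sqnorm (\<lambda>i. c * x i) = (cmod c)\<^sup>2 * sqnorm x"
proof -
  have "ip (\<lambda>i. c * x i) (\<lambda>i. c * x i) = (c * cnj c) * ip x x"
    by (simp add: ip_scale_left ip_scale_right)
  also have "c * cnj c = complex_of_real ((cmod c)\<^sup>2)"
    by (rule complex_norm_square[symmetric])
  finally show ?thesis by simp
qed

lemma sqnorm_le_sum_cmod_square: "\<exists>C>0. \<forall>x. sqnorm x \<le> C * (\<Sum>i\<in>G. (cmod (x i))\<^sup>2)"
proof (intro exI conjI allI)
  define C where "C = 1 + (\<Sum>i\<in>G. \<Sum>k\<in>G. cmod (T i k))"
  show "C > 0"
    unfolding C_def by (simp add: add_pos_nonneg sum_nonneg)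
  fix x
  define r where "r = (\<Sum>i\<in>G. (cmod (x i))\<^sup>2)"
  have r: "r \<ge> 0" unfolding r_def by (simp add: sum_nonneg)
  have "cmod (x i) \<le> sqrt r" if "i \<in> G" for i
    using member_le_sum[of i G "\<lambda>i. (cmod (x i))\<^sup>2"] finite_G that real_le_rsqrt
    unfolding r_def by force
  then have bound: "cmod (x i) * cmod (x k) \<le> r" if "i \<in> G" "k \<in> G" for i k
    using mult_mono[of "cmod (x i)" "sqrt r" "cmod (x k)" "sqrt r"] that r by simp
  have "sqnorm x \<le> (\<Sum>i\<in>G. \<Sum>k\<in>G. cmod (x i * T i k * cnj (x k)))"
    unfolding sform_def
    by (intro order.trans[OF complex_Re_le_cmod] order.trans[OF norm_sum sum_mono] norm_sum)
  also have "\<dots> \<le> (\<Sum>i\<in>G. \<Sum>k\<in>G. cmod (T i k) * r)"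
  proof (intro sum_mono)
    fix i k assume "i \<in> G" "k \<in> G"
    then have "cmod (T i k) * (cmod (x i) * cmod (x k)) \<le> cmod (T i k) * r"
      using bound by (simp add: mult_left_mono)
    then show "cmod (x i * T i k * cnj (x k)) \<le> cmod (T i k) * r"
      by (simp add: norm_mult mult_ac)
  qed
  also have "\<dots> \<le> C * r"
    using r unfolding C_def by (simp add: sum_distrib_right distrib_right)
  finally show "sqnorm x \<le> C * (\<Sum>i\<in>G. (cmod (x i))\<^sup>2)" unfolding r_def .
qed

lemma sqnorm_add_le:
  assumes "sqnorm q \<le> sqnorm p"
  shows "sqnorm (\<lambda>i. p i + q i) \<le> 4 * sqnorm p"
proof -
  have "sqnorm (\<lambda>i. p i + 1 * q i) + sqnorm (\<lambda>i. p i + (-1) * q i) = 2 * sqnorm p + 2 * sqnorm q"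
    unfolding ip_expand by simp
  with sqnorm_nonneg[of "\<lambda>i. p i + (-1) * q i"] assms show ?thesis by simp
qed

lemma sqnorm_add_le_Re_ip:
  assumes "sqnorm q \<le> sqnorm p"
  shows "sqnorm (\<lambda>i. p i + q i) \<le> 2 * Re (ip p (\<lambda>i. p i + q i))"
proof -
  have "sqnorm (\<lambda>i. p i + 1 * q i) = sqnorm p + 2 * Re (ip p q) + sqnorm q"
    unfolding ip_expand using ip_commute[of q p] by simp
  moreover have "Re (ip p (\<lambda>i. p i + q i)) = sqnorm p + Re (ip p q)"
    by (simp add: ip_add_right)
  ultimately show ?thesis using assms by simp
qed

lemma cmod_le_1_if_sqnorm_scale_le:
  assumes "sqnorm (\<lambda>i. c * p i) \<le> sqnorm p" and "\<exists>i\<in>G. p i \<noteq> 0"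
  shows "cmod c \<le> 1"
proof -
  have "sqnorm p > 0" using positive_T[OF assms(2)] .
  with assms(1) have "(cmod c)\<^sup>2 \<le> 1" by (simp add: sqnorm_scale)
  then show ?thesis by (simp add: power_le_one_iff)
qed

end

subsection \<open>Orthogonal projection onto the range of a matrix\<close>

definition orth_proj ::
  "'i set \<Rightarrow> ('i \<Rightarrow> 'i \<Rightarrow> complex) \<Rightarrow> 'g set \<Rightarrow> ('i \<Rightarrow> 'g \<Rightarrow> complex) \<Rightarrow> 'i \<Rightarrow> 'i \<Rightarrow> complex"
  where "orth_proj G T \<Gamma> Q = mmul G (mmul \<Gamma> (mmul \<Gamma> Q (minv \<Gamma> (mmul G (mmul G (mT Q) T) Q))) (mT Q)) T"

locale spd_projection = spd_matrix G T for G :: "'i set" and T +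
  fixes \<Gamma> :: "'g set" and Q :: "'i \<Rightarrow> 'g \<Rightarrow> complex"
  assumes finite_\<Gamma>: "finite \<Gamma>"
    and real_Q: "\<And>i e. i \<in> G \<Longrightarrow> e \<in> \<Gamma> \<Longrightarrow> cnj (Q i e) = Q i e"
    and injective_Q: "\<And>z. \<forall>i\<in>G. mvec \<Gamma> Q z i = 0 \<Longrightarrow> \<forall>e\<in>\<Gamma>. z e = 0"
begin

abbreviation gram :: "'g \<Rightarrow> 'g \<Rightarrow> complex"
  where "gram \<equiv> mmul G (mmul G (mT Q) T) Q"

abbreviation P :: "'i \<Rightarrow> 'i \<Rightarrow> complex"
  where "P \<equiv> orth_proj G T \<Gamma> Q"

lemma ip_mvec_Q: "ip (mvec \<Gamma> Q z) r = (\<Sum>e\<in>\<Gamma>. z e * cnj (mvec G (mT Q) (mvec G T r) e))"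
proof -
  have "ip (mvec \<Gamma> Q z) r = (\<Sum>i\<in>G. \<Sum>e\<in>\<Gamma>. z e * (Q i e * cnj (mvec G T r i)))"
    unfolding ip_eq_sum_mvec mvec_def by (simp add: sum_distrib_right mult_ac)
  also have "\<dots> = (\<Sum>e\<in>\<Gamma>. z e * cnj (mvec G (mT Q) (mvec G T r) e))"
    by (subst sum.swap) (simp add: mvec_def mT_def sum_distrib_left real_Q cong: sum.cong)
  finally show ?thesis .
qed

lemma gram_minvertible: "minvertible \<Gamma> gram"
proof (rule minvertible_if_injective[OF finite_\<Gamma>])
  fix z assume "\<forall>e\<in>\<Gamma>. mvec \<Gamma> gram z e = 0"
  then have "ip (mvec \<Gamma> Q z) (mvec \<Gamma> Q z) = 0"
    by (simp add: ip_mvec_Q mvec_mmul finite_G finite_\<Gamma>)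
  then show "\<forall>e\<in>\<Gamma>. z e = 0"
    by (intro injective_Q ballI zero_if_sqnorm_nonpos) simp_all
qed

lemma mvec_orth_proj:
  "mvec G P x = mvec \<Gamma> Q (mvec \<Gamma> (minv \<Gamma> gram) (mvec G (mT Q) (mvec G T x)))"
  unfolding orth_proj_def by (simp add: mvec_mmul finite_G finite_\<Gamma>)

lemma orth_proj_residual_orthogonal:
  assumes "e \<in> \<Gamma>"
  shows "mvec G (mT Q) (mvec G T (\<lambda>i. x i - mvec G P x i)) e = 0"
proof -
  have "mvec G (mT Q) (mvec G T (mvec G P x)) e = mvec \<Gamma> gram (mvec \<Gamma> (minv \<Gamma> gram) (mvec G (mT Q) (mvec G T x))) e"
    by (simp add: mvec_orth_proj mvec_mmul finite_G finite_\<Gamma>)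
  also have "\<dots> = mvec G (mT Q) (mvec G T x) e"
    by (rule mvec_minv_right[OF finite_\<Gamma> gram_minvertible assms])
  finally show ?thesis by (simp add: mvec_diff)
qed

lemma ip_orth_proj_residual: "ip (mvec G P x) (\<lambda>i. x i - mvec G P x i) = 0"
  unfolding mvec_orth_proj[of x] ip_mvec_Q
  using orth_proj_residual_orthogonal[of _ x] by (simp add: mvec_orth_proj)

lemma sqnorm_reflection: "sqnorm (mvec G (\<lambda>i k. 2 * P i k - mI i k) x) = sqnorm x"
proof -
  define a where "a = mvec G P x"
  define r where "r = (\<lambda>i. x i - mvec G P x i)"
  have orth: "ip a r = 0" "ip r a = 0"
    using ip_orth_proj_residual ip_commute[of r a] unfolding a_def r_def by simp_all
  have "ip (mvec G (\<lambda>i k. 2 * P i k - mI i k) x) (mvec G (\<lambda>i k. 2 * P i k - mI i k) x)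
      = ip (\<lambda>i. a i + (-1) * r i) (\<lambda>i. a i + (-1) * r i)"
    by (rule ip_cong) (simp_all add: mvec_matrix_diff mvec_matrix_scale mvec_mI finite_G a_def r_def)
  also have "\<dots> = ip (\<lambda>i. a i + 1 * r i) (\<lambda>i. a i + 1 * r i)"
    unfolding ip_expand orth by simp
  also have "\<dots> = ip x x"
    by (rule ip_cong) (simp_all add: a_def r_def)
  finally show ?thesis by simp
qed

end

subsection \<open>Scattering matrix of a dissipative matrix\<close>

definition damped_matrix ::
  "'i set \<Rightarrow> ('i \<Rightarrow> 'i \<Rightarrow> complex) \<Rightarrow> ('k \<Rightarrow> 'k \<Rightarrow> complex) \<Rightarrow> ('i \<Rightarrow> 'k \<Rightarrow> complex) \<Rightarrow> 'k \<Rightarrow> 'k \<Rightarrow> complex"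
  where "damped_matrix G T A B = (\<lambda>i k. A i k - \<i> * mmul G (mmul G (mT B) T) B i k)"

definition scattering_matrix :: "'i set \<Rightarrow> 'k set \<Rightarrow> ('i \<Rightarrow> 'i \<Rightarrow> complex) \<Rightarrow>
    ('k \<Rightarrow> 'k \<Rightarrow> complex) \<Rightarrow> ('i \<Rightarrow> 'k \<Rightarrow> complex) \<Rightarrow> 'i \<Rightarrow> 'i \<Rightarrow> complex"
  where "scattering_matrix G EE T A B = (\<lambda>i k. mI i k + 2 * \<i> *
           mmul G (mmul EE (mmul EE B (minv EE (damped_matrix G T A B))) (mT B)) T i k)"

locale dissipative_scattering = spd_matrix G T for G :: "'i set" and T +
  fixes EE :: "'k set" and A :: "'k \<Rightarrow> 'k \<Rightarrow> complex" and B :: "'i \<Rightarrow> 'k \<Rightarrow> complex"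
  assumes finite_EE: "finite EE"
    and real_B: "\<And>i k. i \<in> G \<Longrightarrow> k \<in> EE \<Longrightarrow> cnj (B i k) = B i k"
    and dissipative_A: "\<And>v. Im (\<Sum>i\<in>EE. \<Sum>k\<in>EE. cnj (v i) * A i k * v k) \<le> 0"
begin

abbreviation K :: "'k \<Rightarrow> 'k \<Rightarrow> complex"
  where "K \<equiv> damped_matrix G T A B"

abbreviation S :: "'i \<Rightarrow> 'i \<Rightarrow> complex"
  where "S \<equiv> scattering_matrix G EE T A B"

abbreviation interior_solution :: "('i \<Rightarrow> complex) \<Rightarrow> 'k \<Rightarrow> complex"
  where "interior_solution p \<equiv> mvec EE (minv EE K) (mvec G (mT B) (mvec G T p))"

lemma sum_cnj_mvec_mT:
  "(\<Sum>k\<in>EE. cnj (v k) * mvec G (mT B) w k) = (\<Sum>i\<in>G. cnj (mvec EE B v i) * w i)"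
  unfolding mvec_def mT_def
  by (simp add: sum_distrib_left sum_distrib_right sum.swap[of _ EE G] real_B mult_ac cong: sum.cong)

lemma mvec_damped_matrix:
  "mvec EE K v k = mvec EE A v k - \<i> * mvec G (mT B) (mvec G T (mvec EE B v)) k"
  unfolding damped_matrix_def
  by (simp add: mvec_matrix_diff mvec_matrix_scale mvec_mmul finite_G finite_EE)

lemma quadratic_form_damped_matrix:
  "(\<Sum>k\<in>EE. cnj (v k) * mvec EE K v k)
     = (\<Sum>i\<in>EE. \<Sum>k\<in>EE. cnj (v i) * A i k * v k) - \<i> * complex_of_real (sqnorm (mvec EE B v))"
proof -
  have "(\<Sum>k\<in>EE. cnj (v k) * mvec EE K v k)
      = (\<Sum>k\<in>EE. cnj (v k) * mvec EE A v k)
        - \<i> * (\<Sum>k\<in>EE. cnj (v k) * mvec G (mT B) (mvec G T (mvec EE B v)) k)"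
    by (simp add: mvec_damped_matrix right_diff_distrib sum_subtractf sum_distrib_left mult_ac)
  also have "(\<Sum>k\<in>EE. cnj (v k) * mvec G (mT B) (mvec G T (mvec EE B v)) k)
      = cnj (ip (mvec EE B v) (mvec EE B v))"
    unfolding sum_cnj_mvec_mT ip_eq_sum_mvec by simp
  also have "\<dots> = complex_of_real (sqnorm (mvec EE B v))"
    by (subst ip_self_real) simp
  finally show ?thesis
    by (simp add: mvec_def sum_distrib_left mult.assoc)
qed

lemma damped_matrix_kernel:
  assumes "\<forall>k\<in>EE. mvec EE K v k = 0"
  shows "\<forall>i\<in>G. mvec EE B v i = 0" and "\<forall>k\<in>EE. mvec EE A v k = 0"
proof -
  have "Im (\<Sum>i\<in>EE. \<Sum>k\<in>EE. cnj (v i) * A i k * v k) = sqnorm (mvec EE B v)"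
    using quadratic_form_damped_matrix[of v] assms by (simp add: complex_eq_iff)
  then have "sqnorm (mvec EE B v) \<le> 0"
    using dissipative_A[of v] by simp
  then show Bv: "\<forall>i\<in>G. mvec EE B v i = 0"
    using zero_if_sqnorm_nonpos by blast
  have "mvec G T (mvec EE B v) = (\<lambda>i. 0)"
    using Bv mvec_cong[of G "mvec EE B v" "\<lambda>_. 0" T] by (simp add: mvec_zero)
  then show "\<forall>k\<in>EE. mvec EE A v k = 0"
    using assms by (simp add: mvec_damped_matrix mvec_zero)
qed

context
  assumes K_invertible: "minvertible EE K"
begin

lemma damped_matrix_interior_solution:
  "k \<in> EE \<Longrightarrow> mvec EE K (interior_solution p) k = mvec G (mT B) (mvec G T p) k"
  by (rule mvec_minv_right[OF finite_EE K_invertible])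

lemma mvec_A_interior_solution:
  assumes "k \<in> EE"
  shows "mvec EE A (interior_solution p) k
    = mvec G (mT B) (mvec G T (\<lambda>i. p i + \<i> * mvec EE B (interior_solution p) i)) k"
proof -
  have "mvec G (mT B) (mvec G T p) k
      = mvec EE A (interior_solution p) k - \<i> * mvec G (mT B) (mvec G T (mvec EE B (interior_solution p))) k"
    using mvec_damped_matrix[of "interior_solution p" k] damped_matrix_interior_solution[OF assms, of p]
    by simp
  then show ?thesis by (simp add: eq_diff_eq mvec_add mvec_scale)
qed

lemma mvec_scattering_matrix:
  "i \<in> G \<Longrightarrow> mvec G S p i = p i + 2 * \<i> * mvec EE B (interior_solution p) i"
  unfolding scattering_matrix_def
  by (simp add: mvec_matrix_add mvec_matrix_scale mvec_mI mvec_mmul finite_G finite_EE)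

text \<open>The energy identity: with \<open>y\<close> the interior solution and \<open>q = B y\<close>,
  \<open>\<parallel>S p\<parallel>\<^sup>2 = \<parallel>p\<parallel>\<^sup>2 - 4 Im (q, p) + 4 \<parallel>q\<parallel>\<^sup>2\<close>, while testing \<open>K y = B\<^sup>T T p\<close> against \<open>y\<close>
  and using dissipativity of \<open>A\<close> gives \<open>\<parallel>q\<parallel>\<^sup>2 \<le> Im (q, p)\<close>.\<close>

lemma sqnorm_scattering_matrix_le: "sqnorm (mvec G S p) \<le> sqnorm p"
proof -
  define q where "q = mvec EE B (interior_solution p)"
  have "(\<Sum>k\<in>EE. cnj (interior_solution p k) * mvec EE K (interior_solution p) k)
      = (\<Sum>k\<in>EE. cnj (interior_solution p k) * mvec G (mT B) (mvec G T p) k)"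
    by (intro sum.cong) (simp_all add: damped_matrix_interior_solution)
  also have "\<dots> = cnj (ip q p)"
    unfolding q_def sum_cnj_mvec_mT ip_eq_sum_mvec by simp
  finally have "(\<Sum>k\<in>EE. cnj (interior_solution p k) * mvec EE K (interior_solution p) k)
      = cnj (ip q p)" .
  then have "Im (ip q p) \<ge> sqnorm q"
    using dissipative_A[of "interior_solution p"]
    unfolding quadratic_form_damped_matrix q_def by (simp add: complex_eq_iff)
  moreover have "ip (mvec G S p) (mvec G S p) = ip (\<lambda>i. p i + (2 * \<i>) * q i) (\<lambda>i. p i + (2 * \<i>) * q i)"
    by (rule ip_cong) (simp_all add: mvec_scattering_matrix q_def)
  then have "sqnorm (mvec G S p) = sqnorm p - 4 * Im (ip q p) + 4 * sqnorm q"
    unfolding ip_expand using ip_commute[of p q] by simp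
  ultimately show ?thesis by simp
qed

end

end

subsection \<open>Homogeneous functions on a finite-dimensional space\<close>

definition coordinate_sphere :: "'i set \<Rightarrow> ('i \<Rightarrow> complex) set"
  where "coordinate_sphere G = Pi UNIV (\<lambda>i. if i \<in> G then cball 0 1 else {0})
    \<inter> {p. (\<Sum>i\<in>G. (cmod (p i))\<^sup>2) = 1}"

lemma compact_coordinate_sphere: "compact (coordinate_sphere G)"
proof -
  have "compactin (product_topology (\<lambda>i. euclidean) UNIV)
      (PiE UNIV (\<lambda>i. if i \<in> G then cball (0::complex) 1 else {0}))"
    by (subst compactin_PiE) (auto simp: compactin_euclidean_iff)
  then have "compact (Pi UNIV (\<lambda>i. if i \<in> G then cball (0::complex) 1 else {0}))"
    by (simp add: euclidean_product_topology PiE_UNIV_domain compactin_euclidean_iff)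
  moreover have "continuous_on UNIV (\<lambda>p. \<Sum>i\<in>G. (cmod (p i :: complex))\<^sup>2)"
    by (intro continuous_intros; simp)
  ultimately show ?thesis
    unfolding coordinate_sphere_def by (intro compact_Int_closed closed_Collect_eq continuous_on_const)
qed

lemma rescale_in_coordinate_sphere:
  fixes p :: "'i \<Rightarrow> complex" and G :: "'i set"
  defines "r \<equiv> \<Sum>i\<in>G. (cmod (p i))\<^sup>2"
  assumes "finite G" "r > 0"
  shows "(\<lambda>i. if i \<in> G then p i / complex_of_real (sqrt r) else 0) \<in> coordinate_sphere G"
    (is "?h \<in> _")
proof -
  have "(\<Sum>i\<in>G. (cmod (?h i))\<^sup>2) = (\<Sum>i\<in>G. (cmod (p i))\<^sup>2 / r)"
    using assms(3) by (intro sum.cong refl) (simp add: norm_divide power_divide)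
  also have "\<dots> = 1"
    using assms(3) by (simp add: sum_divide_distrib[symmetric] r_def)
  finally have norm1: "(\<Sum>i\<in>G. (cmod (?h i))\<^sup>2) = 1" .
  have "(cmod (?h i))\<^sup>2 \<le> 1" if "i \<in> G" for i
    using assms(2) that norm1 member_le_sum[of i G "\<lambda>i. (cmod (?h i))\<^sup>2"] by simp
  then have "cmod (?h i) \<le> 1" if "i \<in> G" for i
    using that by (simp add: power_le_one_iff)
  with norm1 show ?thesis
    unfolding coordinate_sphere_def by auto
qed

text \<open>Compare with the minimum on the unit sphere of the coordinates.\<close>

lemma homogeneous_positive_bounded_below:
  fixes f :: "('i \<Rightarrow> complex) \<Rightarrow> real"
  assumes "finite G" and "continuous_on UNIV f"
    and homogeneous: "\<And>c p. f (\<lambda>i. complex_of_real c * p i) = c\<^sup>2 * f p"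
    and local: "\<And>p p'. (\<And>i. i \<in> G \<Longrightarrow> p i = p' i) \<Longrightarrow> f p = f p'"
    and positive: "\<And>p. \<exists>i\<in>G. p i \<noteq> 0 \<Longrightarrow> f p > 0"
  shows "\<exists>\<alpha>>0. \<forall>p. \<alpha> * (\<Sum>i\<in>G. (cmod (p i))\<^sup>2) \<le> f p"
proof -
  define r where "r p = (\<Sum>i\<in>G. (cmod (p i))\<^sup>2)" for p :: "'i \<Rightarrow> complex"
  have r_zero_iff: "r p = 0 \<longleftrightarrow> (\<forall>i\<in>G. p i = 0)" for p
    unfolding r_def using assms(1) by (simp add: sum_nonneg_eq_0_iff)
  have r_nonneg: "r p \<ge> 0" for p
    unfolding r_def by (simp add: sum_nonneg)
  have r_pos_iff: "r p > 0 \<longleftrightarrow> (\<exists>i\<in>G. p i \<noteq> 0)" for p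
    using r_nonneg[of p] r_zero_iff[of p] by (auto simp: order_less_le)
  have f_vanishing: "f p = 0" if "r p = 0" for p
    using local[of p "\<lambda>i. complex_of_real 0 * p i"] homogeneous[of 0 p] that r_zero_iff by simp
  have sphere_min: "\<exists>p0\<in>coordinate_sphere G. \<forall>p\<in>coordinate_sphere G. f p0 \<le> f p"
    if nonempty: "G \<noteq> {}"
  proof -
    obtain i0 where "i0 \<in> G" using nonempty by blast
    define e where "e = (\<lambda>i. if i = i0 then 1 else (0::complex))"
    have "r e > 0"
      unfolding r_pos_iff e_def using \<open>i0 \<in> G\<close> by auto
    then have "coordinate_sphere G \<noteq> {}"
      using rescale_in_coordinate_sphere[OF assms(1), of e] unfolding r_def by blast
    then show ?thesis
      using continuous_attains_inf[OF compact_coordinate_sphere _ continuous_on_subset[OF assms(2)]]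
      by blast
  qed
  show ?thesis
  proof (cases "G = {}")
    case True
    then show ?thesis
      using f_vanishing unfolding r_def by (intro exI[of _ 1]) simp
  next
    case False
    then obtain p0 where p0: "p0 \<in> coordinate_sphere G"
      and min: "\<And>p. p \<in> coordinate_sphere G \<Longrightarrow> f p0 \<le> f p"
      using sphere_min by blast
    have "r p0 = 1" using p0 unfolding coordinate_sphere_def r_def by simp
    then have "\<exists>i\<in>G. p0 i \<noteq> 0" using r_pos_iff[of p0] by simp
    then have "f p0 > 0" by (rule positive)
    moreover have "f p0 * r p \<le> f p" for p
    proof (cases "r p = 0")
      case True
      then show ?thesis using f_vanishing by simp
    next
      case False
      then have rp: "r p > 0" using r_nonneg[of p] by simp
      let ?h = "\<lambda>i. if i \<in> G then p i / complex_of_real (sqrt (r p)) else 0"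
      have "f p = f (\<lambda>i. complex_of_real (sqrt (r p)) * ?h i)"
        using rp by (intro local) simp
      also have "\<dots> = r p * f ?h"
        using rp by (simp add: homogeneous)
      finally show ?thesis
        using min[OF rescale_in_coordinate_sphere[OF assms(1)]] rp
        unfolding r_def by (simp add: mult.commute)
    qed
    ultimately show ?thesis unfolding r_def by blast
  qed
qed

subsection \<open>The block structure\<close>

locale scattering_setting =
  fixes E :: "'e set" and J :: nat and Es :: "nat \<Rightarrow> 'e set" and \<Gamma> :: "'e set"
    and Tb :: "nat \<Rightarrow> 'e \<Rightarrow> 'e \<Rightarrow> real" and Ab :: "nat \<Rightarrow> 'e \<Rightarrow> 'e \<Rightarrow> complex"
  assumes finE: "finite E"
    and E_union: "E = (\<Union>j\<in>{1..J}. Es j)"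
    and Sigma_sub: "Sigma_set J Es \<subseteq> \<Gamma>"
    and Gamma_sub: "\<Gamma> \<subseteq> E"
    and T_sym: "\<And>j e e'. j \<in> {1..J} \<Longrightarrow> e \<in> \<Gamma> \<inter> Es j \<Longrightarrow> e' \<in> \<Gamma> \<inter> Es j \<Longrightarrow>
                  Tb j e e' = Tb j e' e"
    and T_posdef: "\<And>j (x :: 'e \<Rightarrow> real). j \<in> {1..J} \<Longrightarrow> (\<exists>e\<in>\<Gamma> \<inter> Es j. x e \<noteq> 0) \<Longrightarrow>
                  (\<Sum>e\<in>\<Gamma> \<inter> Es j. \<Sum>e'\<in>\<Gamma> \<inter> Es j. x e * Tb j e e' * x e') > 0"
    and A1: "\<And>v. Im (\<Sum>i\<in>EO J Es. \<Sum>k\<in>EO J Es. cnj (v i) * blockdiag Ab i k * v k) \<le> 0"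
    and A2: "minvertible E (mmul (EO J Es) (mmul (EO J Es) (mT Rmat) (blockdiag Ab)) Rmat)"
begin

abbreviation G :: "(nat \<times> 'e) set"
  where "G \<equiv> GO J Es \<Gamma>"

abbreviation EE :: "(nat \<times> 'e) set"
  where "EE \<equiv> EO J Es"

lemma mem_GO [simp]: "(j, e) \<in> G \<longleftrightarrow> j \<in> {1..J} \<and> e \<in> \<Gamma> \<and> e \<in> Es j"
  unfolding GO_def by auto

lemma mem_EO [simp]: "(j, e) \<in> EE \<longleftrightarrow> j \<in> {1..J} \<and> e \<in> Es j"
  unfolding EO_def by auto

lemma GO_eq_Sigma: "G = Sigma {1..J} (\<lambda>j. \<Gamma> \<inter> Es j)"
  unfolding GO_def by auto

lemma finite_Es: "j \<in> {1..J} \<Longrightarrow> finite (Es j)"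
  using finE E_union by (metis UN_upper finite_subset)

lemma finite_GO: "finite G"
  unfolding GO_eq_Sigma using finite_Es by (intro finite_SigmaI) auto

lemma finite_EO: "finite EE"
proof -
  have "EE = Sigma {1..J} Es" unfolding EO_def by auto
  moreover have "finite (Sigma {1..J} Es)" using finite_Es by (intro finite_SigmaI) auto
  ultimately show ?thesis by simp
qed

lemma finite_Gamma: "finite \<Gamma>"
  using finE Gamma_sub finite_subset by blast

lemma GO_subset_EO: "G \<subseteq> EE"
  by auto

lemma Gamma_covered: "e \<in> \<Gamma> \<Longrightarrow> \<exists>j\<in>{1..J}. e \<in> Es j"
  using Gamma_sub E_union by blast

lemma unique_block:
  assumes "e \<notin> \<Gamma>" "j \<in> {1..J}" "k \<in> {1..J}" "e \<in> Es j" "e \<in> Es k"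
  shows "j = k"
proof (rule ccontr)
  assume "j \<noteq> k"
  then have "j < k \<or> k < j" by arith
  then have "e \<in> Sigma_set J Es"
  proof
    assume "j < k"
    then show ?thesis unfolding Sigma_set_def
      by (intro UN_I[of j] UN_I[of k]) (use assms in auto)
  next
    assume "k < j"
    then show ?thesis unfolding Sigma_set_def
      by (intro UN_I[of k] UN_I[of j]) (use assms in auto)
  qed
  with Sigma_sub assms(1) show False by blast
qed

lemma Tmat_apply: "Tmat Tb (j, e) (k, e') = (if j = k then complex_of_real (Tb j e e') else 0)"
  unfolding Tmat_def blockdiag_def by simp

lemma sform_Tmat_blocks:
  "sform G (Tmat Tb) x y
     = (\<Sum>j\<in>{1..J}. \<Sum>e\<in>\<Gamma> \<inter> Es j. \<Sum>e'\<in>\<Gamma> \<inter> Es j. x (j, e) * Tb j e e' * cnj (y (j, e')))"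
proof -
  have fin: "\<forall>j\<in>{1..J}. finite (\<Gamma> \<inter> Es j)" using finite_Es by auto
  have block: "(\<Sum>k\<in>{1..J}. \<Sum>e'\<in>\<Gamma> \<inter> Es k. x (j, e) * Tmat Tb (j, e) (k, e') * cnj (y (k, e')))
      = (\<Sum>e'\<in>\<Gamma> \<inter> Es j. x (j, e) * Tb j e e' * cnj (y (j, e')))" if "j \<in> {1..J}" for j e
  proof -
    have "(\<Sum>k\<in>{1..J}. \<Sum>e'\<in>\<Gamma> \<inter> Es k. x (j, e) * Tmat Tb (j, e) (k, e') * cnj (y (k, e')))
        = (\<Sum>k\<in>{1..J}. if j = k then (\<Sum>e'\<in>\<Gamma> \<inter> Es k. x (j, e) * Tb k e e' * cnj (y (k, e'))) else 0)"
      by (intro sum.cong refl) (simp add: Tmat_apply)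
    then show ?thesis using that by simp
  qed
  have sum_GO: "sum F G = (\<Sum>j\<in>{1..J}. \<Sum>e\<in>\<Gamma> \<inter> Es j. F (j, e))" for F :: "nat \<times> 'e \<Rightarrow> complex"
    unfolding GO_eq_Sigma using sum.Sigma[OF finite_atLeastAtMost fin, of "\<lambda>j e. F (j, e)"] by simp
  show ?thesis
    unfolding sform_def sum_GO by (intro sum.cong[OF refl] block) simp_all
qed

definition block_form :: "nat \<Rightarrow> ('e \<Rightarrow> real) \<Rightarrow> real"
  where "block_form j a = (\<Sum>e\<in>\<Gamma> \<inter> Es j. \<Sum>e'\<in>\<Gamma> \<inter> Es j. a e * Tb j e e' * a e')"

lemma block_form_nonneg: "j \<in> {1..J} \<Longrightarrow> block_form j a \<ge> 0"
  using T_posdef[of j a] unfolding block_form_def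
  by (cases "\<exists>e\<in>\<Gamma> \<inter> Es j. a e \<noteq> 0") (auto intro: less_imp_le)

lemma Re_sform_Tmat:
  "Re (sform G (Tmat Tb) x x) = (\<Sum>j\<in>{1..J}. block_form j (\<lambda>e. Re (x (j, e))) + block_form j (\<lambda>e. Im (x (j, e))))"
proof -
  have Re_triple: "Re (z * complex_of_real t * cnj w) = Re z * t * Re w + Im z * t * Im w" for z w t
    by simp
  show ?thesis
    by (simp only: sform_Tmat_blocks Re_sum Re_triple block_form_def sum.distrib)
qed

lemma Tmat_positive:
  assumes "\<exists>i\<in>G. x i \<noteq> 0"
  shows "Re (sform G (Tmat Tb) x x) > 0"
proof -
  obtain j e where je: "(j, e) \<in> G" "x (j, e) \<noteq> 0" using assms by auto
  then have j: "j \<in> {1..J}" by simp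
  have "Re (x (j, e)) \<noteq> 0 \<or> Im (x (j, e)) \<noteq> 0"
    using je(2) complex_eq_iff by auto
  then have "block_form j (\<lambda>e. Re (x (j, e))) > 0 \<or> block_form j (\<lambda>e. Im (x (j, e))) > 0"
  proof
    assume "Re (x (j, e)) \<noteq> 0"
    then show ?thesis
      using je(1) T_posdef[OF j, of "\<lambda>e. Re (x (j, e))"] unfolding block_form_def by auto
  next
    assume "Im (x (j, e)) \<noteq> 0"
    then show ?thesis
      using je(1) T_posdef[OF j, of "\<lambda>e. Im (x (j, e))"] unfolding block_form_def by auto
  qed
  then have "block_form j (\<lambda>e. Re (x (j, e))) + block_form j (\<lambda>e. Im (x (j, e))) > 0"
    using block_form_nonneg[OF j, of "\<lambda>e. Re (x (j, e))"] block_form_nonneg[OF j, of "\<lambda>e. Im (x (j, e))"]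
    by linarith
  then show ?thesis
    unfolding Re_sform_Tmat using block_form_nonneg
    by (intro sum_pos2[OF finite_atLeastAtMost j]) (auto intro: add_nonneg_nonneg)
qed

sublocale spd_matrix G "Tmat Tb"
proof
  show "finite G" by (rule finite_GO)
  show "cnj (Tmat Tb i k) = Tmat Tb i k" for i k
    by (cases i; cases k) (simp add: Tmat_apply)
  show "Tmat Tb i k = Tmat Tb k i" if "i \<in> G" "k \<in> G" for i k
    using that T_sym by (cases i; cases k) (auto simp: Tmat_apply)
qed (rule Tmat_positive)

lemma innerT_eq_ip: "innerT J Es \<Gamma> Tb = ip"
  by (intro ext) (simp add: innerT_def sform_def)

lemma mvec_Qmat: "i \<in> G \<Longrightarrow> mvec \<Gamma> Qmat z i = z (snd i)"
proof -
  assume "i \<in> G"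
  then have "mvec \<Gamma> Qmat z i = (\<Sum>e\<in>\<Gamma>. if e = snd i then z e else 0)"
    unfolding mvec_def Qmat_def by (intro sum.cong) (auto split: prod.split)
  with \<open>i \<in> G\<close> finite_Gamma show ?thesis by (cases i) simp
qed

lemma mvec_mT_Qmat_outside: "e \<notin> \<Gamma> \<Longrightarrow> mvec G (mT Qmat) w e = 0"
  unfolding mvec_def mT_def Qmat_def by (intro sum.neutral) auto

sublocale spd_projection G "Tmat Tb" \<Gamma> Qmat
proof
  show "finite \<Gamma>" by (rule finite_Gamma)
  show "cnj (Qmat i e) = Qmat i e" for i e
    by (cases i) (simp add: Qmat_def)
  show "\<forall>e\<in>\<Gamma>. z e = 0" if "\<forall>i\<in>G. mvec \<Gamma> Qmat z i = 0" for z
  proof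
    fix e assume "e \<in> \<Gamma>"
    then obtain j where "j \<in> {1..J}" "e \<in> Es j" using Gamma_covered by blast
    with \<open>e \<in> \<Gamma>\<close> have "(j, e) \<in> G" by simp
    with that mvec_Qmat[OF this, of z] show "z e = 0" by simp
  qed
qed

lemma Bmat_eq_mI: "Bmat = mI"
  by (intro ext) (auto simp: Bmat_def mI_def split: prod.splits)

lemma mvec_Bmat: "i \<in> G \<Longrightarrow> mvec EE Bmat v i = v i"
  unfolding Bmat_eq_mI using GO_subset_EO by (intro mvec_mI[OF finite_EO]) blast

lemma mvec_mT_Bmat: "mvec G (mT Bmat) w i = (if i \<in> G then w i else 0)"
proof -
  have "mvec G (mT Bmat) w i = (\<Sum>k\<in>G. if k = i then w k else 0)"
    unfolding mvec_def mT_def Bmat_eq_mI mI_def by (intro sum.cong) auto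
  with finite_GO show ?thesis by simp
qed

sublocale dissipative_scattering G "Tmat Tb" EE "blockdiag Ab" Bmat
proof
  show "finite EE" by (rule finite_EO)
  show "cnj (Bmat i k) = Bmat i k" for i k
    by (simp add: Bmat_eq_mI mI_def)
qed (rule A1)

lemma mvec_Rmat: "(j, e) \<in> EE \<Longrightarrow> mvec E Rmat x (j, e) = x e"
proof -
  assume "(j, e) \<in> EE"
  then have "e \<in> E" using E_union by auto
  have "mvec E Rmat x (j, e) = (\<Sum>e'\<in>E. if e = e' then x e' else 0)"
    unfolding mvec_def Rmat_def by (intro sum.cong) auto
  with \<open>e \<in> E\<close> finE show ?thesis by simp
qed

lemma mT_Rmat_mT_Bmat: "mvec EE (mT Rmat) (mvec G (mT Bmat) w) e = mvec G (mT Qmat) w e"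
proof -
  have "mvec EE (mT Rmat) (mvec G (mT Bmat) w) e = (\<Sum>i\<in>EE. if i \<in> G then Rmat i e * w i else 0)"
    unfolding mvec_def[of EE] mT_def[of Rmat] mvec_mT_Bmat by (intro sum.cong) auto
  also have "\<dots> = (\<Sum>i\<in>G. Rmat i e * w i)"
    using sum.inter_restrict[OF finite_EO, of "\<lambda>i. Rmat i e * w i" G] GO_subset_EO
    by (simp add: Int_absorb1)
  also have "\<dots> = mvec G (mT Qmat) w e"
    unfolding mvec_def mT_def Rmat_def Qmat_def ..
  finally show ?thesis .
qed

text \<open>An index outside \<open>\<Gamma>\<close> lies in a single block, so a vector on \<open>E\<^sub>\<oplus>\<close> that
  agrees across blocks on \<open>\<Gamma>\<close> is the restriction \<open>R x\<close> of a vector on \<open>E\<close>.\<close>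

lemma Rmat_range_if_consistent:
  assumes "\<And>j e. (j, e) \<in> G \<Longrightarrow> v (j, e) = z e"
  shows "\<exists>x. \<forall>i\<in>EE. v i = mvec E Rmat x i"
proof -
  define block where "block e = (SOME j. j \<in> {1..J} \<and> e \<in> Es j)" for e
  define x where "x e = (if e \<in> \<Gamma> then z e else v (block e, e))" for e
  have "v i = mvec E Rmat x i" if "i \<in> EE" for i
  proof -
    obtain j e where i: "i = (j, e)" by (cases i)
    show ?thesis
    proof (cases "e \<in> \<Gamma>")
      case True
      then show ?thesis using that assms i by (simp add: mvec_Rmat x_def)
    next
      case False
      have "\<exists>j. j \<in> {1..J} \<and> e \<in> Es j" using that i by auto
      then have "block e \<in> {1..J} \<and> e \<in> Es (block e)"
        unfolding block_def by (rule someI_ex)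
      then have "block e = j" using unique_block[OF False] that i by auto
      with False that i show ?thesis by (simp add: mvec_Rmat x_def)
    qed
  qed
  then show ?thesis by blast
qed

lemma zero_if_Rmat_range_mT_Rmat_kernel:
  assumes v: "\<forall>i\<in>EE. v i = mvec E Rmat x i"
    and kernel: "\<forall>e\<in>E. mvec EE (mT Rmat) (mvec EE (blockdiag Ab) v) e = 0"
  shows "\<forall>i\<in>EE. v i = 0"
proof -
  have "mvec EE (blockdiag Ab) (mvec E Rmat x) = mvec EE (blockdiag Ab) v"
    using v by (intro mvec_cong) simp
  then have "\<forall>e\<in>E. mvec E (mmul EE (mmul EE (mT Rmat) (blockdiag Ab)) Rmat) x e = 0"
    using kernel by (simp add: mvec_mmul finE finite_EO)
  then have "x e = 0" if "e \<in> E" for e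
    using minvertible_kernel[OF finE A2] that by blast
  moreover have "snd i \<in> E" if "i \<in> EE" for i
    using that E_union by (cases i) auto
  ultimately show ?thesis
    using v by (auto simp: mvec_Rmat)
qed

lemma damped_matrix_invertible: "minvertible EE K"
proof (rule minvertible_if_injective[OF finite_EO])
  fix v assume "\<forall>k\<in>EE. mvec EE K v k = 0"
  from damped_matrix_kernel[OF this]
  have vG: "\<forall>i\<in>G. v i = 0" and Av: "\<forall>k\<in>EE. mvec EE (blockdiag Ab) v k = 0"
    by (simp_all add: mvec_Bmat)
  obtain x where "\<forall>i\<in>EE. v i = mvec E Rmat x i"
    using Rmat_range_if_consistent[of v "\<lambda>_. 0"] vG by blast
  moreover have "mvec EE (mT Rmat) (mvec EE (blockdiag Ab) v) = (\<lambda>e. 0)"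
    using Av mvec_cong[of EE "mvec EE (blockdiag Ab) v" "\<lambda>_. 0"] by (simp add: mvec_zero)
  ultimately show "\<forall>i\<in>EE. v i = 0"
    by (intro zero_if_Rmat_range_mT_Rmat_kernel) auto
qed

subsection \<open>The operator \<open>I + \<Pi> S\<close>\<close>

lemma Smat_eq_scattering_matrix: "Smat J Es \<Gamma> Ab Tb = S"
  unfolding Smat_def scattering_matrix_def damped_matrix_def Let_def ..

lemma Pimat_eq_reflection: "Pimat J Es \<Gamma> Tb = (\<lambda>i k. 2 * P i k - mI i k)"
  unfolding Pimat_def Pmat_def orth_proj_def Let_def ..

abbreviation reflected_scattering :: "(nat \<times> 'e \<Rightarrow> complex) \<Rightarrow> nat \<times> 'e \<Rightarrow> complex"
  where "reflected_scattering p \<equiv> mvec G (\<lambda>i k. 2 * P i k - mI i k) (mvec G S p)"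

lemma sqnorm_reflected_scattering_le: "sqnorm (reflected_scattering p) \<le> sqnorm p"
  using sqnorm_reflection sqnorm_scattering_matrix_le[OF damped_matrix_invertible] by simp

lemma orth_proj_scattering_if_kernel:
  assumes "\<And>i. i \<in> G \<Longrightarrow> p i + reflected_scattering p i = 0" and "i \<in> G"
  shows "mvec G P (mvec G S p) i = \<i> * interior_solution p i"
proof -
  have "p i + (2 * mvec G P (mvec G S p) i - mvec G S p i) = 0"
    using assms by (simp add: mvec_matrix_diff mvec_matrix_scale mvec_mI finite_GO)
  moreover have "mvec G S p i = p i + 2 * \<i> * interior_solution p i"
    using mvec_scattering_matrix[OF damped_matrix_invertible assms(2)] mvec_Bmat[OF assms(2)] by simp
  then have "p i + (2 * mvec G P (mvec G S p) i - mvec G S p i)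
      = 2 * mvec G P (mvec G S p) i - 2 * (\<i> * interior_solution p i)"
    by (simp add: algebra_simps)
  ultimately show ?thesis by simp
qed

text \<open>If \<open>\<Pi> S p = -p\<close>, the interface values of the interior solution \<open>y\<close> equal
  \<open>-\<i> P S p\<close> and so lie in the range of \<open>Q\<close>; hence \<open>y = R x\<close>, and \<open>R\<^sup>T A y\<close> is
  \<open>Q\<^sup>T T\<close> applied to the \<open>T\<close>-orthogonal residual \<open>S p - P S p\<close>, which vanishes.
  Assumption (A2) then forces \<open>y = 0\<close>.\<close>

lemma interior_solution_zero_if_kernel:
  assumes kernel: "\<And>i. i \<in> G \<Longrightarrow> p i + reflected_scattering p i = 0"
  shows "\<forall>k\<in>EE. interior_solution p k = 0"
proof -
  define s where "s = mvec G S p"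
  define y where "y = interior_solution p"
  define r where "r = (\<lambda>i. s i - mvec G P s i)"
  define w where "w = mvec \<Gamma> (minv \<Gamma> gram) (mvec G (mT Qmat) (mvec G (Tmat Tb) s))"
  have Ps: "mvec G P s i = \<i> * y i" if "i \<in> G" for i
    using orth_proj_scattering_if_kernel[OF kernel that] unfolding s_def y_def .
  have "y (j, e) = - \<i> * w e" if "(j, e) \<in> G" for j e
    using Ps[OF that] mvec_Qmat[OF that, of w] unfolding mvec_orth_proj w_def by simp
  then obtain x where x: "\<forall>i\<in>EE. y i = mvec E Rmat x i"
    using Rmat_range_if_consistent[of y "\<lambda>e. - \<i> * w e"] by blast
  have "mvec G (Tmat Tb) (\<lambda>i. p i + \<i> * mvec EE Bmat y i) = mvec G (Tmat Tb) r"
    using mvec_scattering_matrix[OF damped_matrix_invertible] Ps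
    by (intro mvec_cong) (simp add: mvec_Bmat r_def s_def y_def)
  then have "mvec EE (blockdiag Ab) y k = mvec G (mT Bmat) (mvec G (Tmat Tb) r) k" if "k \<in> EE" for k
    using mvec_A_interior_solution[OF damped_matrix_invertible that, of p] unfolding y_def by simp
  then have "mvec EE (mT Rmat) (mvec EE (blockdiag Ab) y) = mvec EE (mT Rmat) (mvec G (mT Bmat) (mvec G (Tmat Tb) r))"
    by (intro mvec_cong) simp
  then have "mvec EE (mT Rmat) (mvec EE (blockdiag Ab) y) e = mvec G (mT Qmat) (mvec G (Tmat Tb) r) e" for e
    by (simp add: mT_Rmat_mT_Bmat)
  moreover have "mvec G (mT Qmat) (mvec G (Tmat Tb) r) e = 0" for e
    using orth_proj_residual_orthogonal[of e s] mvec_mT_Qmat_outside[of e]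
    unfolding r_def by (cases "e \<in> \<Gamma>") simp_all
  ultimately show ?thesis
    using x unfolding y_def by (intro zero_if_Rmat_range_mT_Rmat_kernel) auto
qed

lemma reflected_scattering_kernel:
  assumes "\<And>i. i \<in> G \<Longrightarrow> p i + reflected_scattering p i = 0"
  shows "\<forall>i\<in>G. p i = 0"
proof -
  have "\<forall>k\<in>EE. interior_solution p k = 0"
    using assms by (rule interior_solution_zero_if_kernel)
  then have "mvec EE K (interior_solution p) = mvec EE K (\<lambda>_. 0)"
    by (intro mvec_cong) simp
  then have BtTp: "mvec G (mT Bmat) (mvec G (Tmat Tb) p) k = 0" if "k \<in> EE" for k
    using damped_matrix_interior_solution[OF damped_matrix_invertible that, of p, symmetric]
    by (simp add: mvec_zero)
  then have "mvec G (Tmat Tb) p i = 0" if "i \<in> G" for i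
    using BtTp[of i] that GO_subset_EO by (auto simp: mvec_mT_Bmat)
  then show ?thesis
    using zero_if_mvec_T_zero by blast
qed

abbreviation M :: "nat \<times> 'e \<Rightarrow> nat \<times> 'e \<Rightarrow> complex"
  where "M \<equiv> (\<lambda>i k. mI i k + mmul G (Pimat J Es \<Gamma> Tb) (Smat J Es \<Gamma> Ab Tb) i k)"

lemma mvec_M: "i \<in> G \<Longrightarrow> mvec G M p i = p i + reflected_scattering p i"
  by (simp add: mvec_matrix_add mvec_mI finite_GO mvec_mmul Pimat_eq_reflection Smat_eq_scattering_matrix)

lemma M_kernel: "\<forall>i\<in>G. mvec G M p i = 0 \<Longrightarrow> \<forall>i\<in>G. p i = 0"
  by (intro reflected_scattering_kernel) (simp add: mvec_M)

lemma M_invertible: "minvertible G M"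
  by (rule minvertible_if_injective[OF finite_GO]) (rule M_kernel)

lemma M_eigenvalue:
  assumes nonzero: "\<exists>i\<in>G. p i \<noteq> 0" and eigen: "\<forall>i\<in>G. mvec G M p i = lam * p i"
  shows "lam \<noteq> 0 \<and> cmod (1 - lam) \<le> 1"
proof
  show "lam \<noteq> 0"
    using M_kernel[of p] nonzero eigen by auto
  have "reflected_scattering p i = (lam - 1) * p i" if "i \<in> G" for i
    using eigen mvec_M[OF that, of p] that by (simp add: algebra_simps)
  then have "ip (\<lambda>i. (lam - 1) * p i) (\<lambda>i. (lam - 1) * p i)
      = ip (reflected_scattering p) (reflected_scattering p)"
    by (intro ip_cong) simp_all
  then have "sqnorm (\<lambda>i. (lam - 1) * p i) \<le> sqnorm p"
    using sqnorm_reflected_scattering_le[of p] by simp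
  then have "cmod (lam - 1) \<le> 1"
    using nonzero by (rule cmod_le_1_if_sqnorm_scale_le)
  then show "cmod (1 - lam) \<le> 1"
    by (simp add: norm_minus_commute)
qed

lemma M_norm_le: "normT J Es \<Gamma> Tb (mvec G M p) \<le> 2 * normT J Es \<Gamma> Tb p"
proof -
  have "ip (mvec G M p) (mvec G M p)
      = ip (\<lambda>i. p i + reflected_scattering p i) (\<lambda>i. p i + reflected_scattering p i)"
    by (rule ip_cong) (simp_all add: mvec_M)
  then have "sqnorm (mvec G M p) \<le> 4 * sqnorm p"
    using sqnorm_add_le[OF sqnorm_reflected_scattering_le] by simp
  then have "sqrt (sqnorm (mvec G M p)) \<le> sqrt (4 * sqnorm p)"
    by (rule real_sqrt_le_mono)
  then show ?thesis
    unfolding normT_def innerT_eq_ip by (simp add: real_sqrt_mult)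
qed

lemma M_coercive:
  "\<exists>\<alpha>>0. \<forall>p. Re (innerT J Es \<Gamma> Tb p (mvec G M p)) \<ge> \<alpha> * (normT J Es \<Gamma> Tb p)\<^sup>2"
proof -
  define f where "f p = Re (ip p (mvec G M p))" for p
  have "\<exists>\<alpha>>0. \<forall>p. \<alpha> * (\<Sum>i\<in>G. (cmod (p i))\<^sup>2) \<le> f p"
  proof (rule homogeneous_positive_bounded_below[OF finite_GO])
    show "continuous_on UNIV f"
      unfolding f_def sform_def mvec_def by (intro continuous_intros; simp)
    show "f (\<lambda>i. complex_of_real c * p i) = c\<^sup>2 * f p" for c p
      unfolding f_def mvec_scale ip_scale_left ip_scale_right by (simp add: power2_eq_square)
    show "f p = f p'" if "\<And>i. i \<in> G \<Longrightarrow> p i = p' i" for p p'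
      unfolding f_def using that mvec_cong[of G p p' M] by (simp cong: ip_cong)
    show "f p > 0" if "\<exists>i\<in>G. p i \<noteq> 0" for p
    proof -
      have "\<exists>i\<in>G. mvec G M p i \<noteq> 0"
        using M_kernel[of p] that by blast
      then have "0 < sqnorm (mvec G M p)"
        by (rule positive_T)
      also have "\<dots> \<le> 2 * f p"
        using sqnorm_add_le_Re_ip[OF sqnorm_reflected_scattering_le, of p]
          ip_cong[of p p "mvec G M p" "\<lambda>i. p i + reflected_scattering p i"]
          ip_cong[of "mvec G M p" "\<lambda>i. p i + reflected_scattering p i"]
        unfolding f_def by (simp add: mvec_M)
      finally show ?thesis by simp
    qed
  qed
  then obtain \<alpha> where "\<alpha> > 0" and \<alpha>: "\<And>p. \<alpha> * (\<Sum>i\<in>G. (cmod (p i))\<^sup>2) \<le> f p"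
    by blast
  obtain C where "C > 0" and C: "\<And>p. sqnorm p \<le> C * (\<Sum>i\<in>G. (cmod (p i))\<^sup>2)"
    using sqnorm_le_sum_cmod_square by blast
  have "\<alpha> / C * sqnorm p \<le> f p" for p
    using mult_left_mono[OF C[of p], of "\<alpha> / C"] \<alpha>[of p] \<open>\<alpha> > 0\<close> \<open>C > 0\<close> by simp
  moreover have "(normT J Es \<Gamma> Tb p)\<^sup>2 = sqnorm p" for p
    unfolding normT_def innerT_eq_ip using sqnorm_nonneg by simp
  ultimately show ?thesis
    using \<open>\<alpha> > 0\<close> \<open>C > 0\<close> unfolding f_def innerT_eq_ip by (intro exI[of _ "\<alpha> / C"]) auto
qed

end

theorem proposition1:
  fixes E :: "'e set" and J :: nat and Es :: "nat \<Rightarrow> 'e set" and \<Gamma> :: "'e set"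
    and Tb :: "nat \<Rightarrow> 'e \<Rightarrow> 'e \<Rightarrow> real" and Ab :: "nat \<Rightarrow> 'e \<Rightarrow> 'e \<Rightarrow> complex"
  assumes finE: "finite E"
    and E_union: "E = (\<Union>j\<in>{1..J}. Es j)"
    and Sigma_sub: "Sigma_set J Es \<subseteq> \<Gamma>"
    and Gamma_sub: "\<Gamma> \<subseteq> E"
    and T_sym: "\<And>j e e'. j \<in> {1..J} \<Longrightarrow> e \<in> \<Gamma> \<inter> Es j \<Longrightarrow> e' \<in> \<Gamma> \<inter> Es j \<Longrightarrow>
                  Tb j e e' = Tb j e' e"
    and T_posdef: "\<And>j (x :: 'e \<Rightarrow> real). j \<in> {1..J} \<Longrightarrow> (\<exists>e\<in>\<Gamma> \<inter> Es j. x e \<noteq> 0) \<Longrightarrow>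
                  (\<Sum>e\<in>\<Gamma> \<inter> Es j. \<Sum>e'\<in>\<Gamma> \<inter> Es j. x e * Tb j e e' * x e') > 0"
    and A1: "\<And>v. Im (\<Sum>i\<in>EO J Es. \<Sum>k\<in>EO J Es. cnj (v i) * blockdiag Ab i k * v k) \<le> 0"
    and A2: "minvertible E (mmul (EO J Es) (mmul (EO J Es) (mT Rmat) (blockdiag Ab)) Rmat)"
  defines "M \<equiv> (\<lambda>i k. mI i k + mmul (GO J Es \<Gamma>) (Pimat J Es \<Gamma> Tb) (Smat J Es \<Gamma> Ab Tb) i k)"
  shows "minvertible (GO J Es \<Gamma>) M
         \<and> (\<forall>lam p. (\<exists>i\<in>GO J Es \<Gamma>. p i \<noteq> 0) \<and>
               (\<forall>i\<in>GO J Es \<Gamma>. mvec (GO J Es \<Gamma>) M p i = lam * p i) \<longrightarrow>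
               lam \<noteq> 0 \<and> cmod (1 - lam) \<le> 1)
         \<and> (\<forall>p. normT J Es \<Gamma> Tb (mvec (GO J Es \<Gamma>) M p) \<le> 2 * normT J Es \<Gamma> Tb p)
         \<and> (\<exists>\<alpha>>0. \<forall>p. Re (innerT J Es \<Gamma> Tb p (mvec (GO J Es \<Gamma>) M p))
                         \<ge> \<alpha> * (normT J Es \<Gamma> Tb p)\<^sup>2)"
proof -
  interpret scattering: scattering_setting E J Es \<Gamma> Tb Ab
    using assms(1-8) by (rule scattering_setting.intro)
  show ?thesis
    unfolding M_def
    using scattering.M_invertible scattering.M_eigenvalue scattering.M_norm_le scattering.M_coercive
    by blast
qed

end
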